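(* Let $H$ be a cluster graph, let $a$ be the maximum number of vertices of a connected component of $H$, and suppose $H$ has exactly $b$ connected components with $a$ vertices. Let $q$ be an integer with $b\le q\le |V(H)|$, and let $R$ be obtained from $H$ by deleting exactly one vertex from each component of $H$ with $a$ vertices. Then for every integer $h$: $H$ has a $q$-deletion such that the maximum degree of the remaining graph is $h$ if and only if $R$ has a $(q-b)$-deletion such that the maximum degree of the remaining graph is $h$.
   Context: A cluster graph is a graph in which every connected component is a complete graph. For a graph $G=(V,E)$ and integer $x\in[0,|V|]$, a set $X\subseteq V$ with $|X|=x$ is an $x$-deletion set of $G$ if $\Delta(G-X)=\min\{\Delta(G-Y):Y\subseteq V,|Y|=x\}$; an $x$-deletion of $G$ is the removal of an $x$-deletion set. Thus "$G$ has an $x$-deletion with remaining maximum degree $h$" means $\min\{\Delta(G-Y):|Y|=x\}=h$. *)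

theory Defs
  imports Main
begin

text \<open>A finite simple graph is given by a finite vertex set V and a symmetric,
irreflexive adjacency relation E; only edges between vertices of V count.\<close>

definition simple_graph :: "'a set \<Rightarrow> ('a \<Rightarrow> 'a \<Rightarrow> bool) \<Rightarrow> bool" where
  "simple_graph V E \<longleftrightarrow> finite V \<and> (\<forall>x y. E x y \<longrightarrow> E y x) \<and> (\<forall>x. \<not> E x x)"

definition connected_in :: "'a set \<Rightarrow> ('a \<Rightarrow> 'a \<Rightarrow> bool) \<Rightarrow> 'a \<Rightarrow> 'a \<Rightarrow> bool" where
  "connected_in V E x y \<longleftrightarrow> (\<lambda>u v. E u v \<and> u \<in> V \<and> v \<in> V)\<^sup>*\<^sup>* x y"

definition component :: "'a set \<Rightarrow> ('a \<Rightarrow> 'a \<Rightarrow> bool) \<Rightarrow> 'a \<Rightarrow> 'a set" where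
  "component V E v = {u \<in> V. connected_in V E v u}"

definition components :: "'a set \<Rightarrow> ('a \<Rightarrow> 'a \<Rightarrow> bool) \<Rightarrow> 'a set set" where
  "components V E = component V E ` V"

definition cluster_graph :: "'a set \<Rightarrow> ('a \<Rightarrow> 'a \<Rightarrow> bool) \<Rightarrow> bool" where
  "cluster_graph V E \<longleftrightarrow> simple_graph V E \<and>
     (\<forall>C \<in> components V E. \<forall>x\<in>C. \<forall>y\<in>C. x \<noteq> y \<longrightarrow> E x y)"

definition degree :: "'a set \<Rightarrow> ('a \<Rightarrow> 'a \<Rightarrow> bool) \<Rightarrow> 'a \<Rightarrow> nat" where
  "degree V E v = card {u \<in> V. E v u}"

definition max_degree :: "'a set \<Rightarrow> ('a \<Rightarrow> 'a \<Rightarrow> bool) \<Rightarrow> nat" where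
  "max_degree V E = Max (insert 0 (degree V E ` V))"

text \<open>min {\<Delta>(G - Y) : Y \<subseteq> V, |Y| = x}: the remaining maximum degree of an x-deletion.\<close>
definition deletion_value :: "'a set \<Rightarrow> ('a \<Rightarrow> 'a \<Rightarrow> bool) \<Rightarrow> nat \<Rightarrow> nat" where
  "deletion_value V E x = Min {max_degree (V - Y) E | Y. Y \<subseteq> V \<and> card Y = x}"

end

theory Submission
  imports Defs
begin

text \<open>In a cluster graph the degree of a surviving vertex v is one less than the number of
survivors in its component. Hence deleting a vertex y instead of a vertex s of the same
component leaves all degrees unchanged up to renaming s and y, and once some component of
maximum size a is untouched the remaining maximum degree is already the largest possible
value a - 1. So every q-deletion set can be replaced, without increasing the remaining
maximum degree, by one containing S; and the q-subsets of V(H) containing S are exactly the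
(q - b)-subsets of V(R), extended by S.\<close>

lemma connected_in_sym:
  assumes "simple_graph V E" "connected_in V E x y"
  shows "connected_in V E y x"
  using assms(2) unfolding connected_in_def
proof (induction rule: rtranclp_induct)
  case base
  show ?case by simp
next
  case (step y z)
  then have "E z y \<and> z \<in> V \<and> y \<in> V"
    using assms(1) by (auto simp: simple_graph_def)
  with step.IH show ?case
    by (blast intro: converse_rtranclp_into_rtranclp)
qed

lemma component_subset: "component V E v \<subseteq> V"
  by (auto simp: component_def)

lemma in_component_self: "v \<in> V \<Longrightarrow> v \<in> component V E v"
  by (simp add: component_def connected_in_def)

lemma adjacent_in_component: "u \<in> V \<Longrightarrow> v \<in> V \<Longrightarrow> E v u \<Longrightarrow> u \<in> component V E v"
  by (auto simp: component_def connected_in_def intro: r_into_rtranclp)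

lemma component_eq:
  assumes "simple_graph V E" "u \<in> component V E v"
  shows "component V E u = component V E v"
proof -
  have "connected_in V E v u"
    using assms(2) by (simp add: component_def)
  moreover from connected_in_sym[OF assms(1) this] have "connected_in V E u v" .
  ultimately show ?thesis
    unfolding component_def connected_in_def by (auto intro: rtranclp_trans)
qed

lemma component_of_mem:
  assumes "simple_graph V E" "C \<in> components V E" "x \<in> C"
  shows "C = component V E x"
  using assms component_eq unfolding components_def by fastforce

lemma pairwise_disjnt_components:
  assumes "simple_graph V E"
  shows "pairwise disjnt (components V E)"
  unfolding pairwise_def disjnt_def
  using component_of_mem[OF assms] by blast

lemma neighbours_cluster_graph:
  assumes "cluster_graph V E" "v \<in> V" "W \<subseteq> V"
  shows "{u \<in> W. E v u} = component V E v \<inter> W - {v}"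
proof -
  have "\<not> E v v"
    using assms(1) by (simp add: cluster_graph_def simple_graph_def)
  moreover have "E v u" if "u \<in> component V E v" "u \<noteq> v" for u
  proof -
    have "component V E v \<in> components V E"
      using assms(2) by (simp add: components_def)
    moreover have "\<forall>C \<in> components V E. \<forall>x\<in>C. \<forall>y\<in>C. x \<noteq> y \<longrightarrow> E x y"
      using assms(1) by (simp add: cluster_graph_def)
    ultimately show ?thesis
      using that in_component_self[OF assms(2)] by metis
  qed
  ultimately show ?thesis
    using assms(2,3) adjacent_in_component[of _ V v E] by auto
qed

lemma degree_cluster_graph:
  assumes "cluster_graph V E" "W \<subseteq> V" "v \<in> W"
  shows "degree W E v = card (component V E v \<inter> W) - 1"
proof -
  have "finite (component V E v \<inter> W)"
    using assms(1,2) by (auto simp: cluster_graph_def simple_graph_def intro: finite_subset)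
  moreover have "v \<in> component V E v \<inter> W"
    using assms(2,3) in_component_self[of v V E] by auto
  ultimately show ?thesis
    using assms by (simp add: degree_def neighbours_cluster_graph card_Diff_singleton subset_iff)
qed

lemma degree_le_max_degree: "finite W \<Longrightarrow> v \<in> W \<Longrightarrow> degree W E v \<le> max_degree W E"
  unfolding max_degree_def by (rule Max_ge) auto

lemma max_degree_leI: "finite W \<Longrightarrow> (\<And>v. v \<in> W \<Longrightarrow> degree W E v \<le> M) \<Longrightarrow> max_degree W E \<le> M"
  unfolding max_degree_def by (subst Max_le_iff) auto

lemma max_degree_cluster_graph_le:
  assumes "cluster_graph V E" "\<forall>v\<in>V. card (component V E v) \<le> a" "W \<subseteq> V"
  shows "max_degree W E \<le> a - 1"
proof (rule max_degree_leI)
  have finV: "finite V"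
    using assms(1) by (simp add: cluster_graph_def simple_graph_def)
  then show "finite W"
    using assms(3) finite_subset by blast
  fix v assume v: "v \<in> W"
  have "degree W E v = card (component V E v \<inter> W) - 1"
    using degree_cluster_graph[OF assms(1,3) v] .
  also have "\<dots> \<le> card (component V E v) - 1"
    using finV component_subset[of V E v] by (meson Int_lower1 card_mono diff_le_mono finite_subset)
  also have "\<dots> \<le> a - 1"
    using assms(2,3) v by (simp add: diff_le_mono subset_iff)
  finally show "degree W E v \<le> a - 1" .
qed

lemma max_degree_cluster_graph_ge:
  assumes "cluster_graph V E" "W \<subseteq> V" "s \<in> W" "component V E s \<subseteq> W"
  shows "card (component V E s) - 1 \<le> max_degree W E"
proof -
  have "finite W"
    using assms(1,2) finite_subset by (auto simp: cluster_graph_def simple_graph_def)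
  moreover have "degree W E s = card (component V E s) - 1"
    using degree_cluster_graph[OF assms(1-3)] assms(4) by (simp add: Int_absorb2)
  ultimately show ?thesis
    using degree_le_max_degree[of W s E] assms(3) by simp
qed

lemma max_degree_cluster_graph_untouched_component:
  assumes "cluster_graph V E" "\<forall>v\<in>V. card (component V E v) \<le> a"
    and "Y \<subseteq> V" "s \<in> V" "component V E s \<inter> Y = {}" "card (component V E s) = a" "Z \<subseteq> V"
  shows "max_degree (V - Z) E \<le> max_degree (V - Y) E"
proof -
  have "max_degree (V - Z) E \<le> a - 1"
    using max_degree_cluster_graph_le[OF assms(1,2)] by blast
  also have "a - 1 \<le> max_degree (V - Y) E"
    using max_degree_cluster_graph_ge[OF assms(1), of "V - Y" s] assms(4-6)
      in_component_self[of s V E] component_subset[of V E s]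
    by blast
  finally show ?thesis .
qed

lemma max_degree_cluster_graph_swap:
  assumes cl: "cluster_graph V E" and "Y \<subseteq> V" "y \<in> Y" "s \<in> V - Y" "y \<in> component V E s"
  shows "max_degree (V - insert s (Y - {y})) E \<le> max_degree (V - Y) E"
proof -
  define W where "W = V - insert s (Y - {y})"
  have sg: "simple_graph V E" and finV: "finite V"
    using cl by (simp_all add: cluster_graph_def simple_graph_def)
  have sW: "s \<in> V - Y" and y: "y \<in> V"
    using assms component_subset[of V E s] by auto
  have "degree W E v \<le> max_degree (V - Y) E" if v: "v \<in> W" for v
  proof (cases "component V E v = component V E s")
    case True
    let ?A = "component V E s \<inter> (V - Y)"
    have "component V E s \<inter> W = insert y (?A - {s})"
      using assms y unfolding W_def by auto
    moreover have "s \<in> ?A" "y \<notin> ?A" "finite ?A"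
      using sW in_component_self[of s V E] assms(3) finV by auto
    ultimately have "card (component V E s \<inter> W) = card ?A"
      using card_Suc_Diff1[of ?A s] by simp
    moreover have "degree W E v = card (component V E s \<inter> W) - 1"
      using degree_cluster_graph[OF cl _ v] True unfolding W_def by simp
    moreover have "degree (V - Y) E s = card ?A - 1"
      using degree_cluster_graph[OF cl _ sW] by simp
    ultimately show ?thesis
      using degree_le_max_degree[of "V - Y" s E] finV sW by simp
  next
    case False
    then have "s \<notin> component V E v" "y \<notin> component V E v"
      using component_eq[OF sg] component_eq[OF sg assms(5)] by metis+
    then have same: "component V E v \<inter> W = component V E v \<inter> (V - Y)"
      and vY: "v \<in> V - Y"
      using v in_component_self[of v V E] unfolding W_def by auto
    have "degree W E v = degree (V - Y) E v"
      using degree_cluster_graph[OF cl _ v] degree_cluster_graph[OF cl _ vY] same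
      unfolding W_def by simp
    then show ?thesis
      using degree_le_max_degree[of "V - Y" v E] finV vY by simp
  qed
  then show ?thesis
    using max_degree_leI[of W E] finV unfolding W_def by simp
qed

lemma exists_deletion_set_superset:
  assumes cl: "cluster_graph V E"
    and max_size: "\<forall>v\<in>V. card (component V E v) \<le> a"
    and S: "\<forall>s\<in>S. card (component V E s) = a \<and> S \<inter> component V E s = {s}"
    and "S \<subseteq> V" "card S \<le> q" "q \<le> card V"
    and "Y \<subseteq> V" "card Y = q"
  shows "\<exists>Z. S \<subseteq> Z \<and> Z \<subseteq> V \<and> card Z = q \<and> max_degree (V - Z) E \<le> max_degree (V - Y) E"
  using assms(7,8)
proof (induction "card (S - Y)" arbitrary: Y rule: less_induct)
  case less
  have finV: "finite V"
    using cl by (simp add: cluster_graph_def simple_graph_def)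
  show ?case
  proof (cases "S \<subseteq> Y")
    case True
    with less.prems show ?thesis by blast
  next
    case False
    then obtain s where s: "s \<in> S" "s \<notin> Y" by blast
    then have sV: "s \<in> V" using \<open>S \<subseteq> V\<close> by blast
    show ?thesis
    proof (cases "component V E s \<inter> Y = {}")
      case True
      obtain Z where Z: "S \<subseteq> Z" "Z \<subseteq> V" "card Z = q"
        using exists_subset_between[OF assms(5,6,4) finV] by blast
      moreover have "max_degree (V - Z) E \<le> max_degree (V - Y) E"
        using max_degree_cluster_graph_untouched_component[OF cl max_size less.prems(1) sV True] S s(1) Z(2)
        by blast
      ultimately show ?thesis by blast
    next
      case False
      then obtain y where y: "y \<in> component V E s" "y \<in> Y" by blast
      have "y \<notin> S" using S s y \<open>s \<notin> Y\<close> by auto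
      define Y' where "Y' = insert s (Y - {y})"
      have "finite Y" using less.prems(1) finV finite_subset by blast
      have Y': "Y' \<subseteq> V"
        using less.prems(1) sV unfolding Y'_def by blast
      have "card Y' = q"
        using less.prems(2) s card_Suc_Diff1[OF \<open>finite Y\<close> y(2)] \<open>finite Y\<close>
        unfolding Y'_def by simp
      have "S - Y' \<subset> S - Y"
        using s \<open>y \<notin> S\<close> unfolding Y'_def by blast
      then have "card (S - Y') < card (S - Y)"
        using \<open>S \<subseteq> V\<close> finV by (meson finite_Diff finite_subset psubset_card_mono)
      from less.hyps[OF this Y' \<open>card Y' = q\<close>]
      obtain Z where Z: "S \<subseteq> Z" "Z \<subseteq> V" "card Z = q"
          "max_degree (V - Z) E \<le> max_degree (V - Y') E"
        by blast
      moreover have "max_degree (V - Y') E \<le> max_degree (V - Y) E"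
        unfolding Y'_def using max_degree_cluster_graph_swap[OF cl less.prems(1) y(2) _ y(1)] s sV
        by blast
      ultimately have "max_degree (V - Z) E \<le> max_degree (V - Y) E"
        by linarith
      with Z show ?thesis by blast
    qed
  qed
qed

lemma Min_eq_Min_if_dominated:
  fixes A B :: "'b::linorder set"
  assumes "finite A" "B \<subseteq> A" "B \<noteq> {}" "\<And>x. x \<in> A \<Longrightarrow> \<exists>y\<in>B. y \<le> x"
  shows "Min B = Min A"
proof (rule antisym)
  have "Min A \<in> A"
    using assms(1-3) by (intro Min_in) auto
  then obtain y where y: "y \<in> B" "y \<le> Min A"
    using assms(4) by blast
  have "Min B \<le> y"
    using Min_le[of B y] finite_subset[OF assms(2,1)] y(1) by blast
  then show "Min B \<le> Min A"
    using y(2) by (rule order_trans)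
  show "Min A \<le> Min B"
    using assms(1-3) by (simp add: Min_antimono)
qed

definition deletion_values :: "'a set \<Rightarrow> ('a \<Rightarrow> 'a \<Rightarrow> bool) \<Rightarrow> nat \<Rightarrow> nat set" where
  "deletion_values V E x = {max_degree (V - Y) E | Y. Y \<subseteq> V \<and> card Y = x}"

lemma deletion_value_eq_Min: "deletion_value V E x = Min (deletion_values V E x)"
  by (simp add: deletion_value_def deletion_values_def)

lemma finite_deletion_values: "finite V \<Longrightarrow> finite (deletion_values V E x)"
proof -
  assume "finite V"
  moreover have "deletion_values V E x \<subseteq> (\<lambda>Y. max_degree (V - Y) E) ` Pow V"
    unfolding deletion_values_def by auto
  ultimately show ?thesis
    using finite_subset by blast
qed

lemma deletion_values_nonempty: "finite V \<Longrightarrow> x \<le> card V \<Longrightarrow> deletion_values V E x \<noteq> {}"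
  unfolding deletion_values_def by (metis (mono_tags, lifting) empty_iff mem_Collect_eq obtain_subset_with_card_n)

lemma deletion_values_Diff_subset:
  assumes "finite V" "S \<subseteq> V" "card S \<le> q"
  shows "deletion_values (V - S) E (q - card S) \<subseteq> deletion_values V E q"
proof
  have finS: "finite S"
    using assms(1,2) finite_subset by blast
  fix x assume "x \<in> deletion_values (V - S) E (q - card S)"
  then obtain Y where Y: "Y \<subseteq> V - S" "card Y = q - card S" "x = max_degree (V - S - Y) E"
    unfolding deletion_values_def by blast
  moreover have "V - S - Y = V - (S \<union> Y)"
    by blast
  ultimately have "x = max_degree (V - (S \<union> Y)) E"
    by simp
  moreover have "card (S \<union> Y) = q"
    using Y assms(1,3) finS by (subst card_Un_disjoint) (auto intro: finite_subset)
  moreover have "S \<union> Y \<subseteq> V"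
    using Y(1) assms(2) by blast
  ultimately show "x \<in> deletion_values V E q"
    unfolding deletion_values_def by blast
qed

lemma deletion_value_Diff:
  assumes "finite V" "S \<subseteq> V" "card S \<le> q" "q \<le> card V"
    and superset: "\<And>Y. Y \<subseteq> V \<Longrightarrow> card Y = q \<Longrightarrow>
      \<exists>Z. S \<subseteq> Z \<and> Z \<subseteq> V \<and> card Z = q \<and> max_degree (V - Z) E \<le> max_degree (V - Y) E"
  shows "deletion_value (V - S) E (q - card S) = deletion_value V E q"
  unfolding deletion_value_eq_Min
proof (rule Min_eq_Min_if_dominated)
  show "finite (deletion_values V E q)"
    using assms(1) by (rule finite_deletion_values)
  show "deletion_values (V - S) E (q - card S) \<subseteq> deletion_values V E q"
    using assms(1-3) by (rule deletion_values_Diff_subset)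
  show "deletion_values (V - S) E (q - card S) \<noteq> {}"
    using assms(1,2,4) by (intro deletion_values_nonempty) (auto simp: card_Diff_subset finite_subset)
  fix x assume "x \<in> deletion_values V E q"
  then obtain Y where Y: "Y \<subseteq> V" "card Y = q" "x = max_degree (V - Y) E"
    unfolding deletion_values_def by blast
  obtain Z where Z: "S \<subseteq> Z" "Z \<subseteq> V" "card Z = q" "max_degree (V - Z) E \<le> x"
    using superset[OF Y(1,2)] unfolding Y(3) by blast
  moreover have "card (Z - S) = q - card S"
    using Z assms(1,2) by (simp add: card_Diff_subset finite_subset)
  moreover have "V - Z = V - S - (Z - S)" "Z - S \<subseteq> V - S"
    using Z by blast+
  ultimately have "max_degree (V - Z) E \<in> deletion_values (V - S) E (q - card S)"
    unfolding deletion_values_def by (metis (mono_tags, lifting) mem_Collect_eq)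
  with Z show "\<exists>y \<in> deletion_values (V - S) E (q - card S). y \<le> x"
    by blast
qed

lemma card_eq_card_if_meets_each_once:
  assumes "finite \<C>" "pairwise disjnt \<C>" "S \<subseteq> \<Union>\<C>" "\<forall>C\<in>\<C>. card (S \<inter> C) = 1"
  shows "card S = card \<C>"
proof -
  have "S = (\<Union>C\<in>\<C>. S \<inter> C)"
    using assms(3) by blast
  also have "card \<dots> = (\<Sum>C\<in>\<C>. card (S \<inter> C))"
  proof (rule card_UN_disjoint[OF assms(1)])
    show "\<forall>C\<in>\<C>. finite (S \<inter> C)"
      using assms(4) by (metis card.infinite zero_neq_one)
    show "\<forall>C\<in>\<C>. \<forall>D\<in>\<C>. C \<noteq> D \<longrightarrow> S \<inter> C \<inter> (S \<inter> D) = {}"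
      using assms(2) unfolding pairwise_def disjnt_def by blast
  qed
  also have "\<dots> = card \<C>"
    using assms(4) by simp
  finally show ?thesis .
qed

lemma meets_each_once_component:
  assumes "simple_graph V E" "S \<subseteq> \<Union> {C \<in> components V E. card C = a}"
    and "\<forall>C \<in> components V E. card C = a \<longrightarrow> card (S \<inter> C) = 1" "s \<in> S"
  shows "card (component V E s) = a \<and> S \<inter> component V E s = {s}"
proof -
  obtain C where C: "C \<in> components V E" "card C = a" "s \<in> C"
    using assms(2,4) by blast
  then obtain t where "S \<inter> C = {t}"
    using assms(3) card_1_singletonE by blast
  with assms(4) C(3) have "S \<inter> C = {s}"
    by auto
  then show ?thesis
    using C(2) component_of_mem[OF assms(1) C(1,3)] by simp
qed

theorem lemma23:
  fixes V :: "'a set" and E :: "'a \<Rightarrow> 'a \<Rightarrow> bool" and S :: "'a set"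
    and a b q h :: nat
  assumes "cluster_graph V E"
    and "a = Max (card ` components V E)"
    and "b = card {C \<in> components V E. card C = a}"
    and "b \<le> q" and "q \<le> card V"
    and "S \<subseteq> \<Union> {C \<in> components V E. card C = a}"
    and "\<forall>C \<in> components V E. card C = a \<longrightarrow> card (S \<inter> C) = 1"
  shows "deletion_value V E q = h \<longleftrightarrow> deletion_value (V - S) E (q - b) = h"
proof -
  have sg: "simple_graph V E" and finV: "finite V"
    using assms(1) by (simp_all add: cluster_graph_def simple_graph_def)
  have fin_components: "finite (components V E)"
    using finV by (simp add: components_def)
  have max_size: "\<forall>v\<in>V. card (component V E v) \<le> a"
    using assms(2) fin_components by (simp add: components_def)
  have S_V: "S \<subseteq> V"
    using assms(6) by (auto simp: components_def component_def)
  have "card S = b"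
    unfolding assms(3)
  proof (rule card_eq_card_if_meets_each_once)
    show "pairwise disjnt {C \<in> components V E. card C = a}"
      by (rule pairwise_subset[OF pairwise_disjnt_components[OF sg]]) blast
  qed (use fin_components assms(6,7) in auto)
  have "deletion_value (V - S) E (q - b) = deletion_value V E q"
    using deletion_value_Diff[OF finV S_V _ assms(5)] \<open>card S = b\<close> assms(4)
      exists_deletion_set_superset[OF assms(1) max_size _ S_V _ assms(5)]
      meets_each_once_component[OF sg assms(6,7)]
    by simp
  then show ?thesis
    by auto
qed

end
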